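(* Let $\mathcal P_2$ be a path between nodes $u_0$ and $u_1$, and suppose there is a node $v$ on a shortest path between $u_0$ and $u_1$ such that $\min_{v'\in\mathcal P_2} d_{v,v'}\ge\gamma$. Then $$\ell(\mathcal P_2)\ge 2^{\frac{\gamma}{6\,\delta_{\mathrm{worst}}(G)+2}+1}-1.$$
   Context: $G=(V,E)$ is a finite connected undirected graph with $n\ge 4$ nodes and $d_{u,v}$ denotes the shortest-path distance (number of edges); $\ell(\mathcal P)$ denotes the number of edges of a path $\mathcal P$. For any four nodes $w_1,w_2,w_3,w_4$, form the three sums $d_{w_1,w_2}+d_{w_3,w_4}$, $d_{w_1,w_3}+d_{w_2,w_4}$, $d_{w_1,w_4}+d_{w_2,w_3}$, order them as $S\le M\le L$, and set $\delta_{w_1,w_2,w_3,w_4}=(L-M)/2$; $\delta_{\mathrm{worst}}(G)=\max_{w_1,w_2,w_3,w_4\in V}\delta_{w_1,w_2,w_3,w_4}$. *)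

theory Defs
  imports Complex_Main
begin

definition graph :: "'a set \<Rightarrow> ('a \<Rightarrow> 'a \<Rightarrow> bool) \<Rightarrow> bool" where
  "graph V E \<longleftrightarrow> finite V \<and> (\<forall>x y. E x y \<longrightarrow> x \<in> V \<and> y \<in> V)
     \<and> (\<forall>x y. E x y \<longrightarrow> E y x) \<and> (\<forall>x. \<not> E x x)"

definition walk :: "'a set \<Rightarrow> ('a \<Rightarrow> 'a \<Rightarrow> bool) \<Rightarrow> 'a list \<Rightarrow> bool" where
  "walk V E p \<longleftrightarrow> p \<noteq> [] \<and> set p \<subseteq> V \<and> (\<forall>i. Suc i < length p \<longrightarrow> E (p ! i) (p ! Suc i))"

definition walk_betw :: "'a set \<Rightarrow> ('a \<Rightarrow> 'a \<Rightarrow> bool) \<Rightarrow> 'a \<Rightarrow> 'a list \<Rightarrow> 'a \<Rightarrow> bool" where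
  "walk_betw V E u p v \<longleftrightarrow> walk V E p \<and> hd p = u \<and> last p = v"

definition path_betw :: "'a set \<Rightarrow> ('a \<Rightarrow> 'a \<Rightarrow> bool) \<Rightarrow> 'a \<Rightarrow> 'a list \<Rightarrow> 'a \<Rightarrow> bool" where
  "path_betw V E u p v \<longleftrightarrow> walk_betw V E u p v \<and> distinct p"

definition plen :: "'a list \<Rightarrow> nat" where
  "plen p = length p - 1"

definition connected_graph :: "'a set \<Rightarrow> ('a \<Rightarrow> 'a \<Rightarrow> bool) \<Rightarrow> bool" where
  "connected_graph V E \<longleftrightarrow> (\<forall>u\<in>V. \<forall>v\<in>V. \<exists>p. walk_betw V E u p v)"

definition gdist :: "'a set \<Rightarrow> ('a \<Rightarrow> 'a \<Rightarrow> bool) \<Rightarrow> 'a \<Rightarrow> 'a \<Rightarrow> nat" where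
  "gdist V E u v = (LEAST n. \<exists>p. path_betw V E u p v \<and> plen p = n)"

definition shortest_path :: "'a set \<Rightarrow> ('a \<Rightarrow> 'a \<Rightarrow> bool) \<Rightarrow> 'a \<Rightarrow> 'a list \<Rightarrow> 'a \<Rightarrow> bool" where
  "shortest_path V E u p v \<longleftrightarrow> path_betw V E u p v \<and> plen p = gdist V E u v"

definition delta4 :: "'a set \<Rightarrow> ('a \<Rightarrow> 'a \<Rightarrow> bool) \<Rightarrow> 'a \<Rightarrow> 'a \<Rightarrow> 'a \<Rightarrow> 'a \<Rightarrow> real" where
  "delta4 V E w1 w2 w3 w4 =
     (let s = sort [gdist V E w1 w2 + gdist V E w3 w4,
                    gdist V E w1 w3 + gdist V E w2 w4,
                    gdist V E w1 w4 + gdist V E w2 w3]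
      in (real (s ! 2) - real (s ! 1)) / 2)"

definition delta_worst :: "'a set \<Rightarrow> ('a \<Rightarrow> 'a \<Rightarrow> bool) \<Rightarrow> real" where
  "delta_worst V E = Max {delta4 V E w1 w2 w3 w4 | w1 w2 w3 w4.
                           w1 \<in> V \<and> w2 \<in> V \<and> w3 \<in> V \<and> w4 \<in> V}"

end

theory Submission
  imports Defs
begin

(* Write (x|y)_w = (d(w,x) + d(w,y) - d(x,y)) / 2 for the Gromov product and
   \<delta> = delta_worst.  The four-point condition defining \<delta> is equivalent to
   min((x|z)_w, (z|y)_w) \<le> (x|y)_w + \<delta>.  Bisecting a walk P of length at most 2^k and
   descending each time into the half whose Gromov product is smaller yields a vertex
   x on P with d(w,x) \<le> (hd P | last P)_w + k\<delta> + 1/2.  If w lies on a shortest path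
   between the endpoints u0, u1 of P, then (u0|u1)_w = 0, so every such walk comes
   within k\<delta> + 1/2 of w.  Applied with 2^(k-1) < plen P2 \<le> 2^k, the distance hypothesis
   gives \<gamma> \<le> k\<delta> + 1/2, and elementary estimates of 2 powr turn this into the bound. *)

section \<open>Basic properties of the graph distance\<close>

lemma path_rev:
  assumes "graph V E" "path_betw V E u p w"
  shows "path_betw V E w (rev p) u"
proof -
  have sym: "\<And>x y. E x y \<Longrightarrow> E y x" using assms(1) unfolding graph_def by blast
  have p: "walk V E p" "hd p = u" "last p = w" "distinct p"
    using assms(2) unfolding path_betw_def walk_betw_def by auto
  have "E (rev p ! i) (rev p ! Suc i)" if i: "Suc i < length p" for i
  proof -
    let ?j = "length p - Suc (Suc i)"
    have "E (p ! ?j) (p ! Suc ?j)" using p(1) i unfolding walk_def by auto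
    moreover have "rev p ! i = p ! Suc ?j" "rev p ! Suc i = p ! ?j"
      using i by (auto simp: rev_nth Suc_diff_Suc)
    ultimately show ?thesis using sym by simp
  qed
  then show ?thesis using p unfolding path_betw_def walk_betw_def walk_def
    by (auto simp: hd_rev last_rev)
qed

lemma gdist_sym:
  assumes "graph V E"
  shows "gdist V E x y = gdist V E y x"
proof -
  have "(\<exists>p. path_betw V E x p y \<and> plen p = n) \<longleftrightarrow> (\<exists>p. path_betw V E y p x \<and> plen p = n)" for n
    using path_rev[OF assms] by (metis length_rev plen_def rev_rev_ident)
  then show ?thesis unfolding gdist_def by simp
qed

lemma gdist_le_plen:
  assumes "path_betw V E u p w"
  shows "gdist V E u w \<le> plen p"
  unfolding gdist_def using assms by (auto intro: Least_le)

lemma gdist_self: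
  assumes "x \<in> V"
  shows "gdist V E x x = 0"
proof -
  have "path_betw V E x [x] x" using assms
    unfolding path_betw_def walk_betw_def walk_def by auto
  from gdist_le_plen[OF this] show ?thesis by (simp add: plen_def)
qed

lemma gdist_edge:
  assumes "graph V E" "E x y"
  shows "gdist V E x y \<le> 1"
proof -
  have "x \<in> V" "y \<in> V" "x \<noteq> y" using assms unfolding graph_def by auto
  then have "path_betw V E x [x, y] y" using assms(2)
    unfolding path_betw_def walk_betw_def walk_def
    by (auto simp: less_Suc_eq nth_Cons split: nat.splits)
  from gdist_le_plen[OF this] show ?thesis by (simp add: plen_def)
qed

lemma gdist_split_on_shortest_path:
  assumes "shortest_path V E u0 Q u1" "v \<in> set Q"
  shows "gdist V E u0 v + gdist V E v u1 \<le> gdist V E u0 u1"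
proof -
  obtain i where i: "i < length Q" "v = Q ! i" using assms(2) by (auto simp: in_set_conv_nth)
  have Q: "Q \<noteq> []" "set Q \<subseteq> V" "\<forall>n. Suc n < length Q \<longrightarrow> E (Q ! n) (Q ! Suc n)"
    "hd Q = u0" "last Q = u1" "distinct Q" "plen Q = gdist V E u0 u1"
    using assms(1) unfolding shortest_path_def path_betw_def walk_betw_def walk_def by auto
  have "last (take (Suc i) Q) = Q ! i" using i by (simp add: take_Suc_conv_app_nth)
  then have "path_betw V E u0 (take (Suc i) Q) v"
    unfolding path_betw_def walk_betw_def walk_def using Q i
    by (auto simp: hd_take dest: in_set_takeD)
  then have "gdist V E u0 v \<le> i" using gdist_le_plen i by (fastforce simp: plen_def)
  moreover have "path_betw V E v (drop i Q) u1"
    unfolding path_betw_def walk_betw_def walk_def using Q i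
    by (auto simp: hd_drop_conv_nth dest: in_set_dropD)
  then have "gdist V E v u1 \<le> length Q - 1 - i" using gdist_le_plen i by (fastforce simp: plen_def)
  ultimately show ?thesis using Q(7) i unfolding plen_def by linarith
qed

section \<open>The four-point condition\<close>

lemma sort3_gap:
  fixes a b c :: nat
  shows "real a \<le> max (real b) (real c) + (real (sort [a,b,c] ! 2) - real (sort [a,b,c] ! 1))"
    and "sort [a,b,c] ! 1 \<le> sort [a,b,c] ! 2"
  by (cases "a \<le> b"; cases "b \<le> c"; cases "a \<le> c"; simp)+

lemma delta4_le_delta_worst:
  assumes "graph V E" "w1 \<in> V" "w2 \<in> V" "w3 \<in> V" "w4 \<in> V"
  shows "delta4 V E w1 w2 w3 w4 \<le> delta_worst V E"
proof -
  let ?S = "{delta4 V E w1 w2 w3 w4 | w1 w2 w3 w4. w1 \<in> V \<and> w2 \<in> V \<and> w3 \<in> V \<and> w4 \<in> V}"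
  have "?S = (\<lambda>(a,b,c,d). delta4 V E a b c d) ` (V \<times> V \<times> V \<times> V)"
    by (auto simp: image_iff) (metis (no_types, lifting) case_prod_conv mem_Sigma_iff)
  moreover have "finite V" using assms(1) unfolding graph_def by auto
  ultimately have "finite ?S" by simp
  then show ?thesis unfolding delta_worst_def using assms by (intro Max_ge) blast+
qed

lemma delta4_nonneg: "0 \<le> delta4 V E w1 w2 w3 w4"
  unfolding delta4_def Let_def using sort3_gap(2) by simp

lemma delta_worst_nonneg:
  assumes "graph V E" "w \<in> V"
  shows "0 \<le> delta_worst V E"
  using delta4_nonneg delta4_le_delta_worst[OF assms assms(2) assms(2) assms(2)] by (rule order_trans)

lemma four_point_condition:
  assumes "graph V E" "w1 \<in> V" "w2 \<in> V" "w3 \<in> V" "w4 \<in> V"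
  shows "real (gdist V E w1 w2 + gdist V E w3 w4)
     \<le> max (real (gdist V E w1 w3 + gdist V E w2 w4)) (real (gdist V E w1 w4 + gdist V E w2 w3))
       + 2 * delta_worst V E"
proof -
  define a where "a = gdist V E w1 w2 + gdist V E w3 w4"
  define b where "b = gdist V E w1 w3 + gdist V E w2 w4"
  define c where "c = gdist V E w1 w4 + gdist V E w2 w3"
  have "delta4 V E w1 w2 w3 w4 = (real (sort [a,b,c] ! 2) - real (sort [a,b,c] ! 1)) / 2"
    unfolding delta4_def Let_def a_def b_def c_def by simp
  then have "real (sort [a,b,c] ! 2) - real (sort [a,b,c] ! 1) \<le> 2 * delta_worst V E"
    using delta4_le_delta_worst[OF assms] by simp
  with sort3_gap(1)[of a b c]
  show ?thesis unfolding a_def[symmetric] b_def[symmetric] c_def[symmetric] by linarith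
qed

definition gromov_product :: "'a set \<Rightarrow> ('a \<Rightarrow> 'a \<Rightarrow> bool) \<Rightarrow> 'a \<Rightarrow> 'a \<Rightarrow> 'a \<Rightarrow> real" where
  "gromov_product V E w x y = (real (gdist V E w x) + real (gdist V E w y) - real (gdist V E x y)) / 2"

lemma gromov_product_min_le:
  assumes "graph V E" "w \<in> V" "x \<in> V" "y \<in> V" "z \<in> V"
  shows "min (gromov_product V E w x z) (gromov_product V E w z y)
           \<le> gromov_product V E w x y + delta_worst V E"
proof -
  have "real (gdist V E w z + gdist V E x y)
     \<le> max (real (gdist V E w x + gdist V E z y)) (real (gdist V E w y + gdist V E z x))
       + 2 * delta_worst V E"
    using four_point_condition[OF assms(1,2,5,3,4)] .
  moreover have "gdist V E z x = gdist V E x z" using gdist_sym[OF assms(1)] .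
  ultimately show ?thesis unfolding gromov_product_def min_def max_def
    by (auto simp: field_simps split: if_splits)
qed

section \<open>Bisection of a walk\<close>

lemma midpoint_halves:
  fixes i j N :: nat
  assumes "i \<le> j" "j - i \<le> 2 * N"
  shows "i \<le> (i + j) div 2" "(i + j) div 2 \<le> j" "(i + j) div 2 - i \<le> N" "j - (i + j) div 2 \<le> N"
  using assms by linarith+

lemma walk_bisection:
  assumes G: "graph V E" and P: "walk V E P" and w: "w \<in> V"
  shows "i \<le> j \<Longrightarrow> j < length P \<Longrightarrow> j - i \<le> 2 ^ k \<Longrightarrow>
    \<exists>t. i \<le> t \<and> t \<le> j \<and> real (gdist V E w (P ! t))
      \<le> gromov_product V E w (P ! i) (P ! j) + real k * delta_worst V E + 1 / 2"
proof (induction k arbitrary: i j)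
  case 0
  have inV: "P ! t \<in> V" if "t < length P" for t using P that unfolding walk_def by auto
  have "j - i \<le> 1" using "0.prems" by simp
  then consider "j = i" | "j = Suc i" using "0.prems" by linarith
  then show ?case
  proof cases
    case 1
    then show ?thesis using gdist_self[OF inV[OF 0(2)], of E]
      by (intro exI[of _ i]) (simp add: gromov_product_def)
  next
    case 2
    then have edge: "real (gdist V E (P ! i) (P ! j)) \<le> 1"
      using P 0 gdist_edge[OF G] unfolding walk_def by auto
    show ?thesis
    proof (cases "real (gdist V E w (P ! i)) \<le> real (gdist V E w (P ! j))")
      case True
      then show ?thesis using edge 2 by (intro exI[of _ i]) (simp add: gromov_product_def field_simps)
    next
      case False
      then show ?thesis using edge 2 by (intro exI[of _ j]) (simp add: gromov_product_def field_simps)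
    qed
  qed
next
  case (Suc k)
  (* Bisect at m; the four-point condition bounds the smaller of the two Gromov products
     of the halves, and we keep the vertex found in that half. *)
  have inV: "P ! t \<in> V" if "t < length P" for t using P that unfolding walk_def by auto
  define m where "m = (i + j) div 2"
  have m: "i \<le> m" "m \<le> j" "m - i \<le> 2 ^ k" "j - m \<le> 2 ^ k"
    unfolding m_def using midpoint_halves[of i j "2 ^ k"] Suc.prems by auto
  obtain t1 where t1: "i \<le> t1" "t1 \<le> m" "real (gdist V E w (P ! t1))
      \<le> gromov_product V E w (P ! i) (P ! m) + real k * delta_worst V E + 1 / 2"
    using Suc.IH[of i m] m Suc.prems by auto
  obtain t2 where t2: "m \<le> t2" "t2 \<le> j" "real (gdist V E w (P ! t2))
      \<le> gromov_product V E w (P ! m) (P ! j) + real k * delta_worst V E + 1 / 2"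
    using Suc.IH[of m j] m Suc.prems by auto
  have "min (gromov_product V E w (P ! i) (P ! m)) (gromov_product V E w (P ! m) (P ! j))
          \<le> gromov_product V E w (P ! i) (P ! j) + delta_worst V E"
    using gromov_product_min_le[OF G w] inV m Suc.prems by simp
  then show ?case using t1 t2 m
    by (cases "gromov_product V E w (P ! i) (P ! m) \<le> gromov_product V E w (P ! m) (P ! j)")
      (auto simp: algebra_simps intro: exI[of _ t1] exI[of _ t2])
qed

lemma walk_near_shortest_path:
  assumes G: "graph V E" and P: "walk_betw V E u0 P u1" "plen P \<le> 2 ^ k"
    and Q: "shortest_path V E u0 Q u1" "v \<in> set Q"
  shows "\<exists>x\<in>set P. real (gdist V E v x) \<le> real k * delta_worst V E + 1 / 2"
proof -
  have W: "walk V E P" "P \<noteq> []" "P ! 0 = u0" "P ! plen P = u1"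
    using P(1) unfolding walk_betw_def walk_def plen_def by (auto simp: hd_conv_nth last_conv_nth)
  have v: "v \<in> V" using Q unfolding shortest_path_def path_betw_def walk_betw_def walk_def by auto
  have len: "plen P < length P" using W(2) unfolding plen_def by simp
  obtain t where t: "t \<le> plen P" "real (gdist V E v (P ! t))
      \<le> gromov_product V E v u0 u1 + real k * delta_worst V E + 1 / 2"
    using walk_bisection[OF G W(1) v, of 0 "plen P" k] len P(2) W(3,4) by auto
  have "gromov_product V E v u0 u1 \<le> 0"
    using gdist_split_on_shortest_path[OF Q] gdist_sym[OF G, of v u0]
    unfolding gromov_product_def by simp
  then show ?thesis using t len by (intro bexI[of _ "P ! t"]) auto
qed

lemma dyadic_scale:
  fixes l :: nat
  shows "\<exists>k. l \<le> 2 ^ k \<and> (1 \<le> k \<longrightarrow> 2 ^ (k - 1) < l)"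
proof -
  define k where "k = (LEAST k. l \<le> 2 ^ k)"
  have "l \<le> 2 ^ l" using less_exp[of l] by simp
  then have "l \<le> 2 ^ k" unfolding k_def by (rule LeastI)
  moreover have "2 ^ (k - 1) < l" if "1 \<le> k"
    using not_less_Least[of "k - 1" "\<lambda>k. l \<le> 2 ^ k"] that unfolding k_def by fastforce
  ultimately show ?thesis by blast
qed

text \<open>Numerical estimate needed for the smallest scale k = 1.\<close>

lemma two_powr_five_quarters: "2 powr (5 / 4 :: real) \<le> 3"
proof -
  have "(2 powr (5 / 4 :: real)) ^ 4 = 2 powr (5 / 4 * 4)"
    by (simp add: powr_realpow[symmetric] powr_powr)
  also have "\<dots> = 3 ^ 4 - 49" by simp
  finally have "(2 powr (5 / 4 :: real)) ^ 4 \<le> 3 ^ 4" by simp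
  then show ?thesis using power_le_imp_le_base[of "2 powr (5 / 4 :: real)" 3 3]
    by (simp add: numeral_eq_Suc)
qed

text \<open>Turning \<gamma> \<le> k\<delta> + 1/2 and 2^(k-1) < l into the bound of the corollary: first
  \<gamma>/(6\<delta>+2) \<le> k/4, then 2 powr (k/4 + 1) \<le> l + 1 by cases on k.\<close>

lemma dyadic_length_bound:
  fixes \<gamma> \<delta> :: real and k l :: nat
  assumes "0 \<le> \<delta>" "\<gamma> \<le> real k * \<delta> + 1 / 2" "1 \<le> k" "2 ^ (k - 1) < l"
  shows "2 powr (\<gamma> / (6 * \<delta> + 2) + 1) - 1 \<le> real l"
proof -
  have "\<gamma> / (6 * \<delta> + 2) \<le> (real k * \<delta> + 1 / 2) / (6 * \<delta> + 2)"
    using assms(1,2) by (simp add: divide_right_mono)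
  also have "\<dots> \<le> real k / 4"
  proof -
    have "0 \<le> real k * \<delta>" using assms(1) by simp
    moreover have "real k / 4 * (6 * \<delta> + 2) = real k * \<delta> + real k * \<delta> / 2 + real k / 2"
      by (simp add: algebra_simps)
    ultimately have "real k * \<delta> + 1 / 2 \<le> real k / 4 * (6 * \<delta> + 2)" using assms(3) by linarith
    then show ?thesis using assms(1) by (simp add: pos_divide_le_eq)
  qed
  finally have "2 powr (\<gamma> / (6 * \<delta> + 2) + 1) \<le> 2 powr (real k / 4 + 1)" by simp
  also have "\<dots> \<le> real l + 1"
  proof -
    consider "k = 1" | "k = 2" | "3 \<le> k" using assms(3) by linarith
    then show ?thesis
    proof cases
      case 1
      then show ?thesis using two_powr_five_quarters assms(4) by simp
    next
      case 2
      have "2 powr (real k / 4 + 1) \<le> 2 powr 2" using 2 by (intro powr_mono) auto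
      then show ?thesis using 2 assms(4) by simp
    next
      case 3
      then have "2 powr (real k / 4 + 1) \<le> 2 powr real (k - 1)" by (simp add: of_nat_diff)
      also have "\<dots> = real (2 ^ (k - 1))" by (simp add: powr_realpow)
      finally show ?thesis using assms(4) by linarith
    qed
  qed
  finally show ?thesis by simp
qed

theorem corollary5:
  fixes V :: "'a set" and E :: "'a \<Rightarrow> 'a \<Rightarrow> bool"
    and u0 u1 v :: 'a and P2 Q :: "'a list" and \<gamma> :: real
  assumes "graph V E" and "connected_graph V E" and "card V \<ge> 4"
    and "path_betw V E u0 P2 u1"
    and "shortest_path V E u0 Q u1" and "v \<in> set Q"
    and "\<gamma> > 0"
    and "\<forall>v'\<in>set P2. real (gdist V E v v') \<ge> \<gamma>"
  shows "real (plen P2) \<ge> 2 powr (\<gamma> / (6 * delta_worst V E + 2) + 1) - 1"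
proof -
  obtain k where k: "plen P2 \<le> 2 ^ k" "1 \<le> k \<Longrightarrow> 2 ^ (k - 1) < plen P2"
    using dyadic_scale by blast
  obtain x where x: "x \<in> set P2" "real (gdist V E v x) \<le> real k * delta_worst V E + 1 / 2"
    using walk_near_shortest_path[OF assms(1) _ k(1) assms(5,6)] assms(4)
    unfolding path_betw_def by blast
  have "v \<in> V" using assms(5,6) unfolding shortest_path_def path_betw_def walk_betw_def walk_def by auto
  then have \<delta>: "0 \<le> delta_worst V E" using delta_worst_nonneg[OF assms(1)] by blast
  have \<gamma>: "\<gamma> \<le> real (gdist V E v x)" using assms(8) x(1) by blast
  then have "1 \<le> gdist V E v x" using assms(7) by (cases "gdist V E v x") auto
  then have "1 \<le> k" using x(2) by (cases k) auto
  with \<delta> \<gamma> x(2) k(2) show ?thesis by (intro dyadic_length_bound) auto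
qed

end
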